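(* Let $q\in(0,1]$. Then $\mathrm{Kaz}(\rho,R(SU_q(2)))=1-\frac{2}{[2]_q}=\frac{(1-q)^2}{q^2+1}$.
   Context: $R(SU_q(2))$ is the fusion algebra with irreducible objects $I=\mathbb{Z}_+$, unit $0$, trivial involution, product $m\cdot n=\sum_{k\in\{|m-n|,|m-n|+2,\dots,m+n\}}k=\sum_k N^k_{m,n}k$, and dimension $d(n)=[n+1]_q$, where $[x]_q=\frac{q^{-x}-q^x}{q^{-1}-q}$ for $0<q<1$ and $[x]_1=x$. Let $\mathcal{C}_R=\mathbb{C}[I]$ be its complexification (a unital $*$-algebra). The right regular representation $\rho:\mathcal{C}_R\to B(\ell^2(I))$ is given by $\rho(m)\delta_n=\sum_{k\in I}N^k_{n,\bar m}\delta_k$. A finite generating set is a finite $X\subseteq I$ such that every element of $I$ appears with nonzero coefficient in some product of elements of $X$. For a unital $*$-representation $\pi$ on $H_\pi$ and a finite generating set $X$, $\mathrm{Kaz}(X,\pi,R)=\inf_{\xi\in H_\pi,\|\xi\|=1}\max_{m\in X}\frac{\|\pi(m)\xi-d(m)\xi\|}{d(m)}$, and $\mathrm{Kaz}(\pi,R)=\inf_X\mathrm{Kaz}(X,\pi,R)$ over all finite generating sets $X$. *)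

theory Defs
  imports "HOL-Analysis.Analysis"
begin

definition qnum :: "real \<Rightarrow> real \<Rightarrow> real" where
  "qnum q x = (if q = 1 then x else (q powr (-x) - q powr x) / (q powr (-1) - q))"

text \<open>Dimension function of R(SU_q(2)): d(n) = [n+1]_q.\<close>
definition dimq :: "real \<Rightarrow> nat \<Rightarrow> real" where
  "dimq q n = qnum q (real n + 1)"

text \<open>Fusion coefficients N^k_{m,n} of R(SU_q(2)) (Clebsch-Gordan rule).\<close>
definition fus :: "nat \<Rightarrow> nat \<Rightarrow> nat \<Rightarrow> nat" where
  "fus k m n = (if nat \<bar>int m - int n\<bar> \<le> k \<and> k \<le> m + n \<and> even (m + n + k) then 1 else 0)"

text \<open>Elements of the fusion algebra with nonnegative integer coefficients are
  finitely supported functions nat => nat; product in the fusion algebra.\<close>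
definition fmult :: "(nat \<Rightarrow> nat) \<Rightarrow> (nat \<Rightarrow> nat) \<Rightarrow> (nat \<Rightarrow> nat)" where
  "fmult a b = (\<lambda>k. \<Sum>m\<in>{m. a m \<noteq> 0}. \<Sum>n\<in>{n. b n \<noteq> 0}. a m * b n * fus k m n)"

definition basis_el :: "nat \<Rightarrow> (nat \<Rightarrow> nat)" where
  "basis_el m = (\<lambda>k. if k = m then 1 else 0)"

definition word_prod :: "nat list \<Rightarrow> (nat \<Rightarrow> nat)" where
  "word_prod w = foldr (\<lambda>m acc. fmult (basis_el m) acc) w (basis_el 0)"

definition fin_gen_set :: "nat set \<Rightarrow> bool" where
  "fin_gen_set X \<longleftrightarrow> finite X \<and>
     (\<forall>k. \<exists>w. w \<noteq> [] \<and> set w \<subseteq> X \<and> word_prod w k \<noteq> 0)"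

definition in_l2 :: "(nat \<Rightarrow> complex) \<Rightarrow> bool" where
  "in_l2 \<xi> \<longleftrightarrow> summable (\<lambda>n. (cmod (\<xi> n))\<^sup>2)"

definition l2norm :: "(nat \<Rightarrow> complex) \<Rightarrow> real" where
  "l2norm \<xi> = sqrt (\<Sum>n. (cmod (\<xi> n))\<^sup>2)"

text \<open>Right regular representation: rho(m) delta_n = sum_k N^k_{n,m} delta_k
  (involution trivial), i.e. (rho(m) xi)(k) = sum_n N^k_{n,m} xi(n);
  only n <= k + m contribute.\<close>
definition rho :: "nat \<Rightarrow> (nat \<Rightarrow> complex) \<Rightarrow> (nat \<Rightarrow> complex)" where
  "rho m \<xi> = (\<lambda>k. \<Sum>n\<le>k + m. of_nat (fus k n m) * \<xi> n)"

definition KazX :: "real \<Rightarrow> nat set \<Rightarrow> (nat \<Rightarrow> (nat \<Rightarrow> complex) \<Rightarrow> (nat \<Rightarrow> complex)) \<Rightarrow> real" where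
  "KazX q X \<pi>rep = Inf {Max ((\<lambda>m. l2norm (\<lambda>k. \<pi>rep m \<xi> k - complex_of_real (dimq q m) * \<xi> k) / dimq q m) ` X)
                      | \<xi>. in_l2 \<xi> \<and> l2norm \<xi> = 1}"

definition Kaz :: "real \<Rightarrow> (nat \<Rightarrow> (nat \<Rightarrow> complex) \<Rightarrow> (nat \<Rightarrow> complex)) \<Rightarrow> real" where
  "Kaz q \<pi>rep = Inf {KazX q X \<pi>rep | X. fin_gen_set X}"

end

theory Submission
  imports Defs
begin

text \<open>
  A finite generating set contains some \<open>m \<ge> 1\<close>, and \<open>\<rho>(m)\<close> has norm at most \<open>m + 1\<close>:
  its matrix has entries in \<open>{0, 1}\<close> with at most \<open>m + 1\<close> nonzero entries in every row
  and column (Schur test). Hence \<open>\<parallel>\<rho>(m)\<xi> - d(m)\<xi>\<parallel> / d(m) \<ge> 1 - (m + 1) / [m + 1]\<^sub>q\<close>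
  for unit vectors \<open>\<xi>\<close>. The increments \<open>[n + 1]\<^sub>q - [n]\<^sub>q\<close> grow, because by the recurrence
  \<open>[n + 2]\<^sub>q = [2]\<^sub>q [n + 1]\<^sub>q - [n]\<^sub>q\<close> they increase by \<open>([2]\<^sub>q - 2) [n + 1]\<^sub>q \<ge> 0\<close>;
  so \<open>(m + 1) / [m + 1]\<^sub>q \<le> 2 / [2]\<^sub>q\<close> and \<open>1 - 2 / [2]\<^sub>q\<close> is a lower bound.

  Conversely \<open>\<rho>(1)\<close> is the adjacency operator \<open>\<xi> \<mapsto> \<xi>(k - 1) + \<xi>(k + 1)\<close> of the half-line,
  and the normalised indicator of \<open>{0, \<dots>, N - 1}\<close> satisfies \<open>\<parallel>\<rho>(1)\<xi> - 2\<xi>\<parallel> = \<surd>(3/N)\<close>.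
  For \<open>X = {1}\<close> this gives values \<open>1 - 2 / [2]\<^sub>q + \<surd>(3/N) / [2]\<^sub>q\<close>, which tend to the bound.
\<close>

section \<open>q-numbers\<close>

lemma qnum_of_nat:
  assumes "0 < q" "q < 1"
  shows "qnum q (real n) = (1 / q ^ n - q ^ n) / (1 / q - q)"
  using assms by (simp add: qnum_def powr_minus powr_realpow divide_inverse)

lemma qnum_denominator_pos:
  fixes q :: real
  assumes "0 < q" "q < 1"
  shows "0 < 1 / q - q"
proof -
  have "1 < 1 / q"
    using assms by (simp add: less_divide_eq)
  with assms show ?thesis by linarith
qed

lemma qnum_1:
  assumes "0 < q" "q \<le> 1"
  shows "qnum q 1 = 1"
proof (cases "q = 1")
  case False
  with assms qnum_of_nat[of q 1] qnum_denominator_pos[of q] show ?thesis by simp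
qed (simp add: qnum_def)

lemma qnum_2:
  assumes "0 < q" "q \<le> 1"
  shows "qnum q 2 = 1 / q + q"
proof (cases "q = 1")
  case False
  with assms have "0 < 1 / q - q"
    using qnum_denominator_pos[of q] by simp
  moreover have "1 / q ^ 2 - q ^ 2 = (1 / q + q) * (1 / q - q)"
    by (simp add: algebra_simps power2_eq_square)
  ultimately show ?thesis
    using qnum_of_nat[of q 2] assms False by simp
qed (simp add: qnum_def)

lemma qnum_2_ge_2:
  assumes "0 < q" "q \<le> 1"
  shows "2 \<le> qnum q 2"
proof -
  have "2 * q \<le> 1 + q ^ 2"
    using zero_le_power2[of "1 - q"] by (simp add: power2_diff)
  with assms show ?thesis
    by (simp add: qnum_2 field_simps power2_eq_square)
qed

lemma qnum_rec:
  assumes "0 < q" "q \<le> 1"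
  shows "qnum q (real n + 2) = qnum q 2 * qnum q (real n + 1) - qnum q (real n)"
proof (cases "q = 1")
  case False
  with assms have q: "q < 1" by simp
  define a where "a k = 1 / q ^ k - q ^ k" for k
  define D where "D = 1 / q - q"
  have qnum_a: "qnum q (real k) = a k / D" for k
    using qnum_of_nat[OF assms(1) q, of k] by (simp add: a_def D_def)
  have "a (n + 2) = (1 / q + q) * a (n + 1) - a n"
    using assms by (simp add: a_def field_simps power_add)
  then show ?thesis
    using qnum_a[of "n + 2"] qnum_a[of "n + 1"] qnum_a[of n] qnum_2[OF assms]
    by (simp add: diff_divide_distrib add.commute)
qed (simp add: qnum_def)

lemma dimq_0: "0 < q \<Longrightarrow> q \<le> 1 \<Longrightarrow> dimq q 0 = 1"
  by (simp add: dimq_def qnum_1)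

lemma dimq_1: "dimq q 1 = qnum q 2"
  by (simp add: dimq_def)

lemma dimq_rec:
  assumes "0 < q" "q \<le> 1"
  shows "dimq q (Suc (Suc n)) = qnum q 2 * dimq q (Suc n) - dimq q n"
  using qnum_rec[OF assms, of "Suc n"] by (simp add: dimq_def algebra_simps)

lemma dimq_ge_1_and_increment_ge:
  assumes "0 < q" "q \<le> 1"
  shows "1 \<le> dimq q n \<and> qnum q 2 - 1 \<le> dimq q (Suc n) - dimq q n"
proof (induction n)
  case 0
  show ?case
    using dimq_0[OF assms] dimq_1[of q] by simp
next
  case (Suc n)
  then have "2 \<le> dimq q (Suc n)"
    using qnum_2_ge_2[OF assms] by linarith
  moreover from this have "2 * dimq q (Suc n) \<le> qnum q 2 * dimq q (Suc n)"
    using qnum_2_ge_2[OF assms] by (simp add: mult_right_mono)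
  ultimately show ?case
    using Suc dimq_rec[OF assms, of n] by linarith
qed

lemma dimq_ge_1: "0 < q \<Longrightarrow> q \<le> 1 \<Longrightarrow> 1 \<le> dimq q n"
  using dimq_ge_1_and_increment_ge by blast

lemma dimq_ge_linear:
  assumes "0 < q" "q \<le> 1" "1 \<le> n"
  shows "(real n + 1) * qnum q 2 \<le> 2 * dimq q n"
proof -
  have affine: "1 + real k * (qnum q 2 - 1) \<le> dimq q k" for k
  proof (induction k)
    case (Suc k)
    then show ?case
      using dimq_ge_1_and_increment_ge[OF assms(1,2), of k] by (simp add: algebra_simps)
  qed (simp add: dimq_0[OF assms(1,2)])
  have "0 \<le> (real n - 1) * (qnum q 2 - 2)"
    using assms qnum_2_ge_2[OF assms(1,2)] by simp
  with affine[of n] show ?thesis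
    by (simp add: algebra_simps)
qed

section \<open>Fusion rules and generating sets\<close>

lemma fus_ne_0_iff:
  "fus k n m \<noteq> 0 \<longleftrightarrow> n \<le> k + m \<and> m \<le> n + k \<and> k \<le> n + m \<and> even (n + m + k)"
  unfolding fus_def by auto

lemma of_nat_fus: "of_nat (fus k n m) = (if fus k n m \<noteq> 0 then 1 else 0)"
  by (simp add: fus_def)

lemma fus_commute: "fus k n m = fus n k m"
  using fus_ne_0_iff[of k n m] fus_ne_0_iff[of n k m] of_nat_fus[of k n m] of_nat_fus[of n k m]
  by (metis add.commute add.left_commute of_nat_eq_iff)

lemma fus_support_subset: "{k. fus k n m \<noteq> 0} \<subseteq> (\<lambda>j. n + m - 2 * j) ` {..m}"
proof
  fix k assume "k \<in> {k. fus k n m \<noteq> 0}"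
  then have k: "n \<le> k + m" "m \<le> n + k" "k \<le> n + m" "even (n + m + k)"
    using fus_ne_0_iff by auto
  then have "even (n + m - k)"
    by (metis add_diff_cancel_right' dvd_add_left_iff dvd_diff_nat le_add_diff_inverse2 even_add)
  with k show "k \<in> (\<lambda>j. n + m - 2 * j) ` {..m}"
    by (intro image_eqI[of _ _ "(n + m - k) div 2"]) auto
qed

lemma sum_fus_le:
  assumes "finite S"
  shows "(\<Sum>k\<in>S. real (fus k n m)) \<le> real m + 1"
proof -
  have "(\<Sum>k\<in>S. real (fus k n m)) = real (card (S \<inter> {k. fus k n m \<noteq> 0}))"
    using assms by (simp add: of_nat_fus sum.If_cases)
  also have "card (S \<inter> {k. fus k n m \<noteq> 0}) \<le> card ((\<lambda>j. n + m - 2 * j) ` {..m})"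
    using fus_support_subset by (intro card_mono) auto
  also have "\<dots> \<le> m + 1"
    using card_image_le[of "{..m}"] by simp
  finally show ?thesis by simp
qed

lemma fmult_basis_el: "fmult (basis_el m) a k = (\<Sum>n\<in>{n. a n \<noteq> 0}. a n * fus k m n)"
proof -
  have "{j. basis_el m j \<noteq> 0} = {m}"
    by (auto simp: basis_el_def)
  then show ?thesis
    by (simp add: fmult_def basis_el_def)
qed

lemma fmult_basis_el_ne_0:
  assumes "finite {n. a n \<noteq> 0}" "a n \<noteq> 0" "fus k m n \<noteq> 0"
  shows "fmult (basis_el m) a k \<noteq> 0"
proof -
  have "a n * fus k m n \<le> fmult (basis_el m) a k"
    unfolding fmult_basis_el using assms by (intro member_le_sum) auto
  with assms show ?thesis by (metis le_zero_eq mult_is_0)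
qed

lemma fmult_basis_el_0:
  assumes "finite {n. a n \<noteq> 0}"
  shows "fmult (basis_el 0) a = a"
proof
  fix k
  have "fmult (basis_el 0) a k = (\<Sum>n\<in>{n. a n \<noteq> 0}. if k = n then a n else 0)"
    unfolding fmult_basis_el by (intro sum.cong) (auto simp: fus_def)
  with assms show "fmult (basis_el 0) a k = a k"
    by simp
qed

lemma word_prod_Cons: "word_prod (m # w) = fmult (basis_el m) (word_prod w)"
  by (simp add: word_prod_def)

lemma word_prod_over_0: "set w \<subseteq> {0} \<Longrightarrow> word_prod w = basis_el 0"
proof (induction w)
  case (Cons m w)
  moreover have "finite {n. basis_el 0 n \<noteq> 0}"
    by (simp add: basis_el_def)
  ultimately show ?case
    by (simp add: word_prod_Cons fmult_basis_el_0)
qed (simp add: word_prod_def)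

lemma word_prod_replicate_1:
  "{j. word_prod (replicate n 1) j \<noteq> 0} \<subseteq> {..n} \<and> word_prod (replicate n 1) n \<noteq> 0"
proof (induction n)
  case 0
  show ?case by (auto simp: word_prod_def basis_el_def)
next
  case (Suc n)
  let ?a = "word_prod (replicate n 1)"
  have fin: "finite {j. ?a j \<noteq> 0}"
    using Suc finite_subset by blast
  have "fmult (basis_el 1) ?a k = 0" if "Suc n < k" for k
    unfolding fmult_basis_el using Suc that by (intro sum.neutral) (auto simp: fus_def)
  moreover have "fmult (basis_el 1) ?a (Suc n) \<noteq> 0"
    using Suc fin by (intro fmult_basis_el_ne_0[of _ n]) (auto simp: fus_def)
  ultimately show ?case
    by (auto simp: word_prod_Cons not_less[symmetric])
qed

lemma fin_gen_set_1: "fin_gen_set {1}"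
  unfolding fin_gen_set_def
proof (intro conjI allI)
  fix k
  show "\<exists>w. w \<noteq> [] \<and> set w \<subseteq> {1} \<and> word_prod w k \<noteq> 0"
  proof (cases "k = 0")
    case True
    have "finite {j. word_prod [1] j \<noteq> 0}" "word_prod [1] 1 \<noteq> 0"
      using word_prod_replicate_1[of 1] finite_subset by auto
    then have "word_prod [1, 1] 0 \<noteq> 0"
      unfolding word_prod_Cons[of 1 "[1]"] by (intro fmult_basis_el_ne_0[of _ 1]) (auto simp: fus_def)
    with True show ?thesis
      by (intro exI[of _ "[1, 1]"]) auto
  qed (use word_prod_replicate_1[of k] in \<open>intro exI[of _ "replicate k 1"], auto\<close>)
qed simp

lemma fin_gen_set_has_nonzero:
  assumes "fin_gen_set X"
  obtains m where "m \<in> X" "1 \<le> m"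
proof -
  obtain w where "set w \<subseteq> X" "word_prod w 1 \<noteq> 0"
    using assms unfolding fin_gen_set_def by blast
  then have "\<not> X \<subseteq> {0}"
    using word_prod_over_0 by (auto simp: basis_el_def)
  then obtain m where "m \<in> X" "m \<noteq> 0"
    by blast
  with that show ?thesis by simp
qed

section \<open>Square-summable sequences\<close>

lemma schur_test:
  fixes A :: "'i \<Rightarrow> 'j \<Rightarrow> real"
  assumes nonneg: "\<And>i j. 0 \<le> A i j" and "0 \<le> R"
    and rows: "\<And>i. i \<in> I \<Longrightarrow> (\<Sum>j\<in>J. A i j) \<le> R"
    and cols: "\<And>j. j \<in> J \<Longrightarrow> (\<Sum>i\<in>I. A i j) \<le> C"
  shows "(\<Sum>i\<in>I. (\<Sum>j\<in>J. A i j * x j)\<^sup>2) \<le> R * C * (\<Sum>j\<in>J. (x j)\<^sup>2)"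
proof -
  have row: "(\<Sum>j\<in>J. A i j * x j)\<^sup>2 \<le> R * (\<Sum>j\<in>J. A i j * (x j)\<^sup>2)" if "i \<in> I" for i
  proof -
    have "(\<Sum>j\<in>J. A i j * x j)\<^sup>2 = (\<Sum>j\<in>J. sqrt (A i j) * (sqrt (A i j) * x j))\<^sup>2"
      using nonneg by (simp add: mult.assoc[symmetric])
    also have "\<dots> \<le> (\<Sum>j\<in>J. (sqrt (A i j))\<^sup>2) * (\<Sum>j\<in>J. (sqrt (A i j) * x j)\<^sup>2)"
      by (rule Cauchy_Schwarz_ineq_sum)
    also have "\<dots> = (\<Sum>j\<in>J. A i j) * (\<Sum>j\<in>J. A i j * (x j)\<^sup>2)"
      using nonneg by (simp add: power_mult_distrib)
    also have "\<dots> \<le> R * (\<Sum>j\<in>J. A i j * (x j)\<^sup>2)"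
      using rows[OF that] nonneg by (intro mult_right_mono sum_nonneg) auto
    finally show ?thesis .
  qed
  have "(\<Sum>i\<in>I. (\<Sum>j\<in>J. A i j * x j)\<^sup>2) \<le> (\<Sum>i\<in>I. R * (\<Sum>j\<in>J. A i j * (x j)\<^sup>2))"
    using row by (rule sum_mono)
  also have "\<dots> = R * (\<Sum>j\<in>J. (\<Sum>i\<in>I. A i j) * (x j)\<^sup>2)"
    by (simp add: sum_distrib_left sum_distrib_right sum.swap[of _ I])
  also have "\<dots> \<le> R * (\<Sum>j\<in>J. C * (x j)\<^sup>2)"
    using \<open>0 \<le> R\<close> cols by (intro mult_left_mono sum_mono mult_right_mono) auto
  finally show ?thesis
    by (simp add: sum_distrib_left mult.assoc)
qed

lemma L2_set_le_l2norm:
  assumes "in_l2 f" "finite A"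
  shows "L2_set (\<lambda>k. cmod (f k)) A \<le> l2norm f"
  using assms unfolding in_l2_def l2norm_def L2_set_def
  by (intro real_sqrt_le_mono sum_le_suminf) auto

lemma l2norm_le_if_L2_set_le:
  assumes partial: "\<And>K. L2_set (\<lambda>k. cmod (f k)) {..<K} \<le> B"
  shows "in_l2 f" "l2norm f \<le> B"
proof -
  have "0 \<le> B"
    using partial[of 0] by simp
  have sums: "(\<Sum>k<K. (cmod (f k))\<^sup>2) \<le> B\<^sup>2" for K
    using partial[of K] unfolding L2_set_def by (rule sqrt_le_D)
  then show "in_l2 f"
    unfolding in_l2_def by (intro summableI_nonneg_bounded) auto
  then have "(\<Sum>k. (cmod (f k))\<^sup>2) \<le> B\<^sup>2"
    unfolding in_l2_def using sums by (rule suminf_le_const)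
  with \<open>0 \<le> B\<close> show "l2norm f \<le> B"
    unfolding l2norm_def by (rule real_le_lsqrt)
qed

lemma l2_diff:
  assumes "in_l2 f" "in_l2 g"
  shows "in_l2 (\<lambda>k. f k - g k)" "l2norm (\<lambda>k. f k - g k) \<le> l2norm f + l2norm g"
proof -
  have "L2_set (\<lambda>k. cmod (f k - g k)) {..<K} \<le> l2norm f + l2norm g" for K
  proof -
    have "L2_set (\<lambda>k. cmod (f k - g k)) {..<K} \<le> L2_set (\<lambda>k. cmod (f k) + cmod (g k)) {..<K}"
      by (intro L2_set_mono norm_triangle_ineq4) auto
    also have "\<dots> \<le> L2_set (\<lambda>k. cmod (f k)) {..<K} + L2_set (\<lambda>k. cmod (g k)) {..<K}"
      by (rule L2_set_triangle_ineq)
    also have "\<dots> \<le> l2norm f + l2norm g"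
      using assms by (intro add_mono L2_set_le_l2norm) auto
    finally show ?thesis .
  qed
  then show "in_l2 (\<lambda>k. f k - g k)" "l2norm (\<lambda>k. f k - g k) \<le> l2norm f + l2norm g"
    by (fact l2norm_le_if_L2_set_le)+
qed

lemma l2_scale:
  assumes "in_l2 f"
  shows "in_l2 (\<lambda>k. c * f k)" "l2norm (\<lambda>k. c * f k) = cmod c * l2norm f"
proof -
  have sq: "(cmod (c * f k))\<^sup>2 = (cmod c)\<^sup>2 * (cmod (f k))\<^sup>2" for k
    by (simp add: norm_mult power_mult_distrib)
  show "in_l2 (\<lambda>k. c * f k)"
    using assms unfolding in_l2_def sq by (rule summable_mult)
  show "l2norm (\<lambda>k. c * f k) = cmod c * l2norm f"
    using assms unfolding in_l2_def l2norm_def sq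
    by (simp add: suminf_mult real_sqrt_mult)
qed

lemma l2_finite_support:
  assumes "finite S" "\<And>k. k \<notin> S \<Longrightarrow> f k = 0"
  shows "in_l2 f" "l2norm f = L2_set (\<lambda>k. cmod (f k)) S"
proof -
  have zero: "\<And>k. k \<notin> S \<Longrightarrow> (cmod (f k))\<^sup>2 = 0"
    using assms(2) by simp
  show "in_l2 f"
    unfolding in_l2_def using assms(1) zero by (rule summable_finite)
  show "l2norm f = L2_set (\<lambda>k. cmod (f k)) S"
    unfolding l2norm_def L2_set_def using assms(1) zero by (simp add: suminf_finite)
qed

section \<open>The right regular representation\<close>

lemma fus_1: "fus k n 1 = (if n = k + 1 \<or> (1 \<le> k \<and> n = k - 1) then 1 else 0)"
  unfolding fus_def by (cases n) (auto, presburger+)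

lemma rho_1: "rho 1 \<xi> k = (if k = 0 then 0 else \<xi> (k - 1)) + \<xi> (k + 1)"
proof -
  have "rho 1 \<xi> k = (\<Sum>n\<le>k + 1. (if n = k + 1 then \<xi> n else 0) + (if 1 \<le> k \<and> n = k - 1 then \<xi> n else 0))"
    unfolding rho_def fus_1 by (intro sum.cong) auto
  then show ?thesis
    by (simp add: sum.distrib)
qed

lemma rho_eq_sum:
  assumes "k < K"
  shows "rho m \<xi> k = (\<Sum>n<K + m. of_nat (fus k n m) * \<xi> n)"
  unfolding rho_def using assms
  by (intro sum.mono_neutral_left) (auto simp: fus_def)

lemma rho_partial_sum_le:
  "(\<Sum>k<K. (cmod (rho m \<xi> k))\<^sup>2) \<le> (real m + 1)\<^sup>2 * (\<Sum>n<K + m. (cmod (\<xi> n))\<^sup>2)"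
proof -
  have "cmod (rho m \<xi> k) \<le> (\<Sum>n<K + m. real (fus k n m) * cmod (\<xi> n))" if "k < K" for k
    unfolding rho_eq_sum[OF that] by (rule norm_sum[THEN order_trans]) (simp add: norm_mult)
  then have "(\<Sum>k<K. (cmod (rho m \<xi> k))\<^sup>2) \<le> (\<Sum>k<K. (\<Sum>n<K + m. real (fus k n m) * cmod (\<xi> n))\<^sup>2)"
    by (intro sum_mono power_mono) auto
  also have "\<dots> \<le> (real m + 1) * (real m + 1) * (\<Sum>n<K + m. (cmod (\<xi> n))\<^sup>2)"
  proof (rule schur_test)
    show "(\<Sum>n<K + m. real (fus k n m)) \<le> real m + 1" for k
      using sum_fus_le[of "{..<K + m}" k m] by (simp add: fus_commute[of k])
    show "(\<Sum>k<K. real (fus k n m)) \<le> real m + 1" for n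
      by (rule sum_fus_le) simp
  qed auto
  finally show ?thesis
    by (simp add: power2_eq_square)
qed

lemma rho_bounded:
  assumes "in_l2 \<xi>"
  shows "in_l2 (rho m \<xi>)" "l2norm (rho m \<xi>) \<le> (real m + 1) * l2norm \<xi>"
proof -
  have "L2_set (\<lambda>k. cmod (rho m \<xi> k)) {..<K} \<le> (real m + 1) * l2norm \<xi>" for K
  proof -
    have "L2_set (\<lambda>k. cmod (rho m \<xi> k)) {..<K} \<le> sqrt ((real m + 1)\<^sup>2 * (\<Sum>n<K + m. (cmod (\<xi> n))\<^sup>2))"
      unfolding L2_set_def by (intro real_sqrt_le_mono rho_partial_sum_le)
    also have "\<dots> = (real m + 1) * L2_set (\<lambda>n. cmod (\<xi> n)) {..<K + m}"
      by (simp add: L2_set_def real_sqrt_mult)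
    also have "\<dots> \<le> (real m + 1) * l2norm \<xi>"
      using assms by (intro mult_left_mono L2_set_le_l2norm) auto
    finally show ?thesis .
  qed
  then show "in_l2 (rho m \<xi>)" "l2norm (rho m \<xi>) \<le> (real m + 1) * l2norm \<xi>"
    by (fact l2norm_le_if_L2_set_le)+
qed

lemma rho_defect_ge:
  assumes "in_l2 \<xi>" "l2norm \<xi> = 1" "0 \<le> d"
  shows "d - (real m + 1) \<le> l2norm (\<lambda>k. rho m \<xi> k - complex_of_real d * \<xi> k)"
proof -
  define \<eta> where "\<eta> = (\<lambda>k. rho m \<xi> k - complex_of_real d * \<xi> k)"
  have "in_l2 \<eta>"
    unfolding \<eta>_def using assms(1) by (intro l2_diff l2_scale rho_bounded)
  have "d = l2norm (\<lambda>k. complex_of_real d * \<xi> k)"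
    using assms by (simp add: l2_scale)
  also have "\<dots> = l2norm (\<lambda>k. rho m \<xi> k - \<eta> k)"
    by (simp add: \<eta>_def)
  also have "\<dots> \<le> l2norm (rho m \<xi>) + l2norm \<eta>"
    using assms(1) \<open>in_l2 \<eta>\<close> by (intro l2_diff rho_bounded)
  also have "\<dots> \<le> real m + 1 + l2norm \<eta>"
    using rho_bounded(2)[OF assms(1), of m] assms(2) by simp
  finally show ?thesis
    unfolding \<eta>_def by linarith
qed

definition unif_vec :: "nat \<Rightarrow> nat \<Rightarrow> complex" where
  "unif_vec N k = (if k < N then complex_of_real (1 / sqrt (real N)) else 0)"

lemma unif_vec_unit:
  assumes "1 \<le> N"
  shows "in_l2 (unif_vec N)" "l2norm (unif_vec N) = 1"
proof -
  have "\<And>k. k \<notin> {..<N} \<Longrightarrow> unif_vec N k = 0"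
    by (simp add: unif_vec_def)
  note l2_finite_support[OF finite_lessThan this]
  moreover have "(\<Sum>k<N. (cmod (unif_vec N k))\<^sup>2) = 1"
    using assms by (simp add: unif_vec_def norm_divide power_divide)
  ultimately show "in_l2 (unif_vec N)" "l2norm (unif_vec N) = 1"
    by (simp_all add: L2_set_def)
qed

lemma rho_1_unif_vec_defect:
  assumes "2 \<le> N"
  shows "l2norm (\<lambda>k. rho 1 (unif_vec N) k - 2 * unif_vec N k) = sqrt (3 / real N)"
proof -
  define S where "S = {0, N - 1, N}"
  have modulus: "cmod (rho 1 (unif_vec N) k - 2 * unif_vec N k) = (if k \<in> S then 1 / sqrt (real N) else 0)" for k
  proof -
    consider "k = 0" | "0 < k" "k < N - 1" | "k = N - 1" | "k = N" | "N < k"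
      by linarith
    then show ?thesis
      unfolding rho_1 using assms by cases (auto simp: S_def unif_vec_def norm_divide)
  qed
  then have "rho 1 (unif_vec N) k - 2 * unif_vec N k = 0" if "k \<notin> S" for k
    using that by (metis norm_eq_zero)
  then have "l2norm (\<lambda>k. rho 1 (unif_vec N) k - 2 * unif_vec N k)
      = L2_set (\<lambda>k. cmod (rho 1 (unif_vec N) k - 2 * unif_vec N k)) S"
    by (intro l2_finite_support) (auto simp: S_def)
  also have "\<dots> = sqrt (real (card S) / real N)"
    using modulus by (simp add: L2_set_def power_divide S_def)
  also have "card S = 3"
    using assms by (simp add: S_def)
  finally show ?thesis by simp
qed

section \<open>The Kazhdan constant\<close>

definition kaz_defect ::
    "real \<Rightarrow> (nat \<Rightarrow> (nat \<Rightarrow> complex) \<Rightarrow> nat \<Rightarrow> complex) \<Rightarrow> (nat \<Rightarrow> complex) \<Rightarrow> nat \<Rightarrow> real" where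
  "kaz_defect q \<pi> \<xi> m = l2norm (\<lambda>k. \<pi> m \<xi> k - complex_of_real (dimq q m) * \<xi> k) / dimq q m"

definition kaz_values ::
    "real \<Rightarrow> nat set \<Rightarrow> (nat \<Rightarrow> (nat \<Rightarrow> complex) \<Rightarrow> nat \<Rightarrow> complex) \<Rightarrow> real set" where
  "kaz_values q X \<pi> = {Max (kaz_defect q \<pi> \<xi> ` X) | \<xi>. in_l2 \<xi> \<and> l2norm \<xi> = 1}"

lemma KazX_eq_Inf_kaz_values: "KazX q X \<pi> = Inf (kaz_values q X \<pi>)"
  unfolding KazX_def kaz_values_def kaz_defect_def ..

lemma kaz_defect_rho_ge:
  assumes q: "0 < q" "q \<le> 1" and "1 \<le> m" and \<xi>: "in_l2 \<xi>" "l2norm \<xi> = 1"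
  shows "1 - 2 / qnum q 2 \<le> kaz_defect q rho \<xi> m"
proof -
  let ?d = "dimq q m"
  have "0 < ?d"
    using dimq_ge_1[OF q] by (rule less_le_trans[rotated]) simp
  have "(real m + 1) / ?d \<le> 2 / qnum q 2"
    using dimq_ge_linear[OF q \<open>1 \<le> m\<close>] \<open>0 < ?d\<close> qnum_2_ge_2[OF q]
    by (simp add: field_simps)
  moreover have "1 - (real m + 1) / ?d = (?d - (real m + 1)) / ?d"
    using \<open>0 < ?d\<close> by (simp add: field_simps)
  moreover have "(?d - (real m + 1)) / ?d \<le> kaz_defect q rho \<xi> m"
    unfolding kaz_defect_def using \<open>0 < ?d\<close> rho_defect_ge[OF \<xi>, of ?d m]
    by (intro divide_right_mono) auto
  ultimately show ?thesis by linarith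
qed

lemma kaz_values_rho_ge:
  assumes q: "0 < q" "q \<le> 1" and X: "fin_gen_set X" and "x \<in> kaz_values q X rho"
  shows "1 - 2 / qnum q 2 \<le> x"
proof -
  obtain \<xi> where \<xi>: "in_l2 \<xi>" "l2norm \<xi> = 1" and x: "x = Max (kaz_defect q rho \<xi> ` X)"
    using assms(4) unfolding kaz_values_def by blast
  obtain m where "m \<in> X" "1 \<le> m"
    using fin_gen_set_has_nonzero[OF X] .
  then have "kaz_defect q rho \<xi> m \<le> x"
    using X unfolding x fin_gen_set_def by (intro Max_ge) auto
  with kaz_defect_rho_ge[OF q \<open>1 \<le> m\<close> \<xi>] show ?thesis
    by linarith
qed

lemma KazX_rho_ge:
  assumes q: "0 < q" "q \<le> 1" and X: "fin_gen_set X"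
  shows "1 - 2 / qnum q 2 \<le> KazX q X rho"
  unfolding KazX_eq_Inf_kaz_values
proof (rule cInf_greatest)
  show "kaz_values q X rho \<noteq> {}"
    using unif_vec_unit[of 1] unfolding kaz_values_def by auto
qed (rule kaz_values_rho_ge[OF q X])

lemma kaz_defect_rho_1_unif_vec_le:
  assumes q: "0 < q" "q \<le> 1" and "2 \<le> N"
  shows "kaz_defect q rho (unif_vec N) 1 \<le> 1 - 2 / qnum q 2 + sqrt (3 / real N) / qnum q 2"
proof -
  let ?c = "qnum q 2" and ?\<xi> = "unif_vec N"
  have \<xi>: "in_l2 ?\<xi>" "l2norm ?\<xi> = 1"
    using unif_vec_unit[of N] \<open>2 \<le> N\<close> by auto
  have "l2norm (\<lambda>k. rho 1 ?\<xi> k - complex_of_real ?c * ?\<xi> k)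
      = l2norm (\<lambda>k. (rho 1 ?\<xi> k - 2 * ?\<xi> k) - complex_of_real (?c - 2) * ?\<xi> k)"
    by (simp add: algebra_simps)
  also have "\<dots> \<le> l2norm (\<lambda>k. rho 1 ?\<xi> k - 2 * ?\<xi> k) + l2norm (\<lambda>k. complex_of_real (?c - 2) * ?\<xi> k)"
    using \<xi> by (intro l2_diff l2_scale rho_bounded)
  also have "\<dots> = sqrt (3 / real N) + (?c - 2)"
    using rho_1_unif_vec_defect[OF \<open>2 \<le> N\<close>] l2_scale(2)[OF \<xi>(1)] \<xi>(2) qnum_2_ge_2[OF q]
    by (simp del: of_real_diff)
  finally have "kaz_defect q rho ?\<xi> 1 \<le> (sqrt (3 / real N) + (?c - 2)) / ?c"
    unfolding kaz_defect_def dimq_1 using qnum_2_ge_2[OF q] by (simp add: divide_right_mono)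
  also have "\<dots> = 1 - 2 / ?c + sqrt (3 / real N) / ?c"
    using qnum_2_ge_2[OF q] by (simp add: field_simps)
  finally show ?thesis .
qed

lemma KazX_rho_1_le:
  assumes q: "0 < q" "q \<le> 1"
  shows "KazX q {1} rho \<le> 1 - 2 / qnum q 2"
proof -
  let ?c = "qnum q 2"
  have "bdd_below (kaz_values q {1} rho)"
    using kaz_values_rho_ge[OF q fin_gen_set_1] by (rule bdd_belowI)
  moreover have "kaz_defect q rho (unif_vec N) 1 \<in> kaz_values q {1} rho" if "1 \<le> N" for N
    using unif_vec_unit[OF that] unfolding kaz_values_def by auto
  ultimately have "KazX q {1} rho \<le> 1 - 2 / ?c + sqrt (3 / real N) / ?c" if "2 \<le> N" for N
    unfolding KazX_eq_Inf_kaz_values using that kaz_defect_rho_1_unif_vec_le[OF q that]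
    by (meson cInf_lower order_trans one_le_numeral)
  moreover have "(\<lambda>N. 1 - 2 / ?c + sqrt (3 / real N) / ?c) \<longlonglongrightarrow> 1 - 2 / ?c + sqrt 0 / ?c"
    using qnum_2_ge_2[OF q] by (intro tendsto_intros) auto
  ultimately show ?thesis
    by (intro LIMSEQ_le_const[where x = "1 - 2 / ?c"]) auto
qed

theorem proposition4p6:
  fixes q :: real
  assumes "0 < q" and "q \<le> 1"
  shows "Kaz q rho = 1 - 2 / qnum q 2 \<and> 1 - 2 / qnum q 2 = (1 - q)\<^sup>2 / (q\<^sup>2 + 1)"
proof
  have attained: "KazX q {1} rho = 1 - 2 / qnum q 2"
    using KazX_rho_1_le[OF assms] KazX_rho_ge[OF assms fin_gen_set_1] by linarith
  show "Kaz q rho = 1 - 2 / qnum q 2"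
    unfolding Kaz_def using fin_gen_set_1 KazX_rho_ge[OF assms]
    by (intro cInf_eq_minimum) (auto simp flip: attained)
  have "0 < 1 + q * q"
    by (simp add: add_pos_nonneg)
  then show "1 - 2 / qnum q 2 = (1 - q)\<^sup>2 / (q\<^sup>2 + 1)"
    using assms by (simp add: qnum_2 field_simps power2_eq_square)
qed

end
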